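(* Let $\underline\phi\le\overline\phi$ and $\underline\psi\le\overline\psi$ be functions on $[0,1]$ satisfying (P1)–(P3), and let \[\mathcal C^{\mathrm M}=\{C^{\mathrm M}_{\phi,\psi}:\ \underline\phi\le\phi\le\overline\phi,\ \underline\psi\le\psi\le\overline\psi,\ \phi,\psi \text{ satisfy (P1)–(P3)}\}.\] Then $\mathcal C^{\mathrm M}$ has a pointwise minimal and maximal element, namely $\min\mathcal C^{\mathrm M}=C^{\mathrm M}_{\underline\phi,\underline\psi}$ and $\max\mathcal C^{\mathrm M}=C^{\mathrm M}_{\overline\phi,\overline\psi}$, i.e. $C^{\mathrm M}_{\underline\phi,\underline\psi}(u,v)\le C^{\mathrm M}_{\phi,\psi}(u,v)\le C^{\mathrm M}_{\overline\phi,\overline\psi}(u,v)$ for all $C^{\mathrm M}_{\phi,\psi}\in\mathcal C^{\mathrm M}$ and $u,v\in[0,1]$.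
   Context: Conditions on $\phi,\psi:[0,1]\to\mathbb R$: (P1) non-decreasing; (P2) $\phi(0)=\psi(0)=0$, $\phi(1)=\psi(1)=1$; (P3) $\phi(u)/u$ and $\psi(v)/v$ are non-increasing on $(0,1]$ (values in $[1,\infty]$). Marshall's copula: $C^{\mathrm M}_{\phi,\psi}(u,v)=uv\min\{\phi(u)/u,\psi(v)/v\}$ if $uv>0$, and $0$ if $uv=0$. *)

theory Defs
  imports Complex_Main
begin

text \<open>Conditions (P1)-(P3) on a function on [0,1].\<close>
definition admissible :: "(real \<Rightarrow> real) \<Rightarrow> bool" where
  "admissible \<phi> \<longleftrightarrow>
     mono_on {0..1} \<phi> \<and> \<phi> 0 = 0 \<and> \<phi> 1 = 1 \<and>
     monotone_on {0<..1} (\<le>) (\<ge>) (\<lambda>u. \<phi> u / u)"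

definition marshall :: "(real \<Rightarrow> real) \<Rightarrow> (real \<Rightarrow> real) \<Rightarrow> real \<Rightarrow> real \<Rightarrow> real" where
  "marshall \<phi> \<psi> u v = (if u * v > 0 then u * v * min (\<phi> u / u) (\<psi> v / v) else 0)"

definition marshall_class ::
  "(real \<Rightarrow> real) \<Rightarrow> (real \<Rightarrow> real) \<Rightarrow> (real \<Rightarrow> real) \<Rightarrow> (real \<Rightarrow> real) \<Rightarrow> (real \<Rightarrow> real \<Rightarrow> real) set" where
  "marshall_class \<phi>l \<phi>u \<psi>l \<psi>u =
     {marshall \<phi> \<psi> | \<phi> \<psi>. admissible \<phi> \<and> admissible \<psi> \<and>
        (\<forall>x\<in>{0..1}. \<phi>l x \<le> \<phi> x \<and> \<phi> x \<le> \<phi>u x \<and> \<psi>l x \<le> \<psi> x \<and> \<psi> x \<le> \<psi>u x)}"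

end

theory Submission
  imports Defs
begin

text \<open>On positive arguments both ratios \<open>\<phi> u / u\<close> and \<open>\<psi> v / v\<close> grow with the
  generators, hence so does their minimum: Marshall's copula is pointwise monotone in its
  generators. The bounds themselves lie in the class, so they give its minimum and maximum;
  conditions (P1)--(P3) matter only for this membership.\<close>

lemma marshall_mono:
  fixes u v :: real
  assumes "0 \<le> u" "0 \<le> v" "\<phi> u \<le> \<phi>' u" "\<psi> v \<le> \<psi>' v"
  shows "marshall \<phi> \<psi> u v \<le> marshall \<phi>' \<psi>' u v"
proof (cases "u * v > 0")
  case True
  then have "0 < u" "0 < v"
    using assms(1,2) by (auto simp: zero_less_mult_iff)
  then have "\<phi> u / u \<le> \<phi>' u / u" "\<psi> v / v \<le> \<psi>' v / v"
    using assms(3,4) by (simp_all add: divide_right_mono)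
  then have "min (\<phi> u / u) (\<psi> v / v) \<le> min (\<phi>' u / u) (\<psi>' v / v)"
    by linarith
  with True show ?thesis
    by (simp add: marshall_def mult_left_mono)
qed (simp add: marshall_def)

lemma marshall_classE:
  assumes "C \<in> marshall_class \<phi>l \<phi>u \<psi>l \<psi>u"
  obtains \<phi> \<psi> where "C = marshall \<phi> \<psi>"
    and "\<forall>x\<in>{0..1}. \<phi>l x \<le> \<phi> x \<and> \<phi> x \<le> \<phi>u x \<and> \<psi>l x \<le> \<psi> x \<and> \<psi> x \<le> \<psi>u x"
  using assms unfolding marshall_class_def by blast

theorem proposition6:
  fixes \<phi>l \<phi>u \<psi>l \<psi>u :: "real \<Rightarrow> real"
  assumes "admissible \<phi>l" and "admissible \<phi>u" and "admissible \<psi>l" and "admissible \<psi>u"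
    and "\<forall>x\<in>{0..1}. \<phi>l x \<le> \<phi>u x" and "\<forall>x\<in>{0..1}. \<psi>l x \<le> \<psi>u x"
  shows "marshall \<phi>l \<psi>l \<in> marshall_class \<phi>l \<phi>u \<psi>l \<psi>u
       \<and> marshall \<phi>u \<psi>u \<in> marshall_class \<phi>l \<phi>u \<psi>l \<psi>u
       \<and> (\<forall>C\<in>marshall_class \<phi>l \<phi>u \<psi>l \<psi>u. \<forall>u\<in>{0..1}. \<forall>v\<in>{0..1}.
            marshall \<phi>l \<psi>l u v \<le> C u v \<and> C u v \<le> marshall \<phi>u \<psi>u u v)"
proof (intro conjI ballI)
  show "marshall \<phi>l \<psi>l \<in> marshall_class \<phi>l \<phi>u \<psi>l \<psi>u"
    and "marshall \<phi>u \<psi>u \<in> marshall_class \<phi>l \<phi>u \<psi>l \<psi>u"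
    unfolding marshall_class_def using assms by fastforce+
next
  fix C and u v :: real
  assume "C \<in> marshall_class \<phi>l \<phi>u \<psi>l \<psi>u" "u \<in> {0..1}" "v \<in> {0..1}"
  then obtain \<phi> \<psi> where "C = marshall \<phi> \<psi>"
    and "\<phi>l u \<le> \<phi> u" "\<phi> u \<le> \<phi>u u" "\<psi>l v \<le> \<psi> v" "\<psi> v \<le> \<psi>u v" "0 \<le> u" "0 \<le> v"
    by (auto elim!: marshall_classE)
  then show "marshall \<phi>l \<psi>l u v \<le> C u v" and "C u v \<le> marshall \<phi>u \<psi>u u v"
    by (simp_all add: marshall_mono)
qed

end
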